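(* Let $r\ge 1$ and let $\mathcal{R}$ be a block of $\mathcal{A}_e^r$. Then there exists $M_\ast$ such that for every integer $M\ge M_\ast$, with $\mathbf{M}=(0,M,2M,\dots,(e-1)M)$, every element of $\Psi_r(\mathrm{Str}(\mathcal{R};\mathbf{M}))$ is a Rouquier partition, and $\Psi_r(\mathrm{Str}(\mathcal{R};\mathbf{M}))$ is contained in a single $r$-Rouquier block of $\mathcal{A}_e$.
   Context: Fix an integer $e\ge 2$. A partition is a weakly decreasing sequence $\lambda=(\lambda_1,\lambda_2,\dots)$ of non-negative integers with finite sum $|\lambda|$; $\Lambda$ denotes the set of partitions and $\Lambda^{(m)}$ the set of $m$-multipartitions, i.e. $m$-tuples $\boldsymbol\lambda=(\lambda^{(1)},\dots,\lambda^{(m)})$ of partitions, with $|\boldsymbol\lambda|=\sum_k|\lambda^{(k)}|$. A $\beta$-set is a subset $B\subseteq\mathbb{Z}$ containing all sufficiently small integers and no sufficiently large ones. For $\lambda\in\Lambda$ and $s\in\mathbb{Z}$ set $B_s(\lambda)=\{\lambda_i-i+s : i\ge 1\}$; every $\beta$-set equals $B_s(\lambda)$ for a unique pair $(\lambda,s)$. Let $\mathcal{A}_e=\Lambda\times\mathbb{Z}$ (abacus configurations with $e$ runners) and $\mathcal{A}_e^m=\Lambda^{(m)}\times\mathbb{Z}^m$, where $(\boldsymbol\lambda,\mathbf{s})$ is identified with the $m$-tuple of $\beta$-sets $(B_{s_1}(\lambda^{(1)}),\dots,B_{s_m}(\lambda^{(m)}))$. Blocks: for $(\boldsymbol\lambda,\mathbf{s})\in\mathcal{A}_e^m$,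 its $e$-residue multiset is the multiset of the values $s_k+y-x \bmod e$ over all nodes $(x,y,k)$ with $x\ge1$, $1\le y\le\lambda^{(k)}_x$, $1\le k\le m$. Define $(\boldsymbol\lambda,\mathbf{s})\approx_e(\boldsymbol\mu,\mathbf{s}')$ iff $\mathbf{s}=\mathbf{s}'$, $|\boldsymbol\lambda|=|\boldsymbol\mu|$ and the $e$-residue multisets coincide. Its equivalence classes are called blocks. The map $\eta$: for $(\lambda,s)\in\mathcal{A}_e$ with $B=B_s(\lambda)$ and $0\le i<e$, the set $C_i=\{(b-i)/e : b\in B,\ b\equiv i \bmod e\}$ is a $\beta$-set, so $C_i=B_{t_i}(\rho_i)$ for a unique $(\rho_i,t_i)\in\Lambda\times\mathbb{Z}$; set $\eta(\lambda,s)=((\rho_0,\dots,\rho_{e-1}),(t_0,\dots,t_{e-1}))$. The $e$-weight of $\lambda$ is $\mathrm{wt}(\lambda)=\sum_i|\rho_i|$. Rouquier: $(\lambda,s)\in\mathcal{A}_e$ with $\eta(\lambda,s)=(\boldsymbol\rho,\mathbf{t})$ is a Rouquier partition if $\mathrm{wt}(\lambda)\le t_{i+1}-t_i+1$ for all $0\le i<e-1$, and an $r$-Rouquier partition if $\mathrm{wt}(\lambda)\le t_{i+1}-t_i+r$ for all $0\le i<e-1$. A block of $\mathcal{A}_e$ is an $r$-Rouquier block if all its elements are $r$-Rouquier partitions. Uglov's map: for $1\le k\le r$ define $\psi_k:\mathbb{Z}\to\mathbb{Z}$ by $\psi_k(ae+i)=((a+1)r-k)e+i$ for $a\in\mathbb{Z}$,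 $0\le i<e$. For $(\boldsymbol\lambda,\mathbf{s})\in\mathcal{A}_e^r$ the set $B=\bigsqcup_{k=1}^r\psi_k(B_{s_k}(\lambda^{(k)}))$ is a $\beta$-set, and $\Psi_r(\boldsymbol\lambda,\mathbf{s})$ is the unique $(\tilde\lambda,\tilde s)\in\mathcal{A}_e$ with $B_{\tilde s}(\tilde\lambda)=B$. Stretching: for $\mathbf{M}\in\mathbb{Z}^e$ and $(\lambda,s)\in\mathcal{A}_e$ with $\eta(\lambda,s)=(\boldsymbol\rho,(t_0,\dots,t_{e-1}))$, $\mathrm{Str}((\lambda,s);\mathbf{M})$ is the unique element of $\mathcal{A}_e$ whose image under $\eta$ is $(\boldsymbol\rho,(t_0+M_0,\dots,t_{e-1}+M_{e-1}))$. For $(\boldsymbol\lambda,\mathbf{s})\in\mathcal{A}_e^r$, $\mathrm{Str}((\boldsymbol\lambda,\mathbf{s});\mathbf{M})$ is obtained by applying this to each component $(\lambda^{(k)},s_k)$; for a subset $\mathcal{R}$, $\mathrm{Str}(\mathcal{R};\mathbf{M})$ is its image. *)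

theory Defs
  imports Main "HOL-Library.Multiset"
begin

(* A partition is represented by the list of its nonzero parts, weakly decreasing. *)
type_synonym config = "nat list \<times> int"   (* element (lambda, s) of A_e *)

definition is_partition :: "nat list \<Rightarrow> bool" where
  "is_partition xs \<longleftrightarrow> sorted_wrt (\<lambda>a b. b \<le> a) xs \<and> 0 \<notin> set xs"

definition part_nth :: "nat list \<Rightarrow> nat \<Rightarrow> nat" where
  "part_nth xs i = (if 1 \<le> i \<and> i \<le> length xs then xs ! (i - 1) else 0)"

definition part_size :: "nat list \<Rightarrow> nat" where
  "part_size xs = sum_list xs"

definition beta :: "int \<Rightarrow> nat list \<Rightarrow> int set" where
  "beta s xs = {int (part_nth xs i) - int i + s | i. i \<ge> 1}"

definition valid_conf :: "config \<Rightarrow> bool" where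
  "valid_conf c \<longleftrightarrow> is_partition (fst c)"

definition conf_beta :: "config \<Rightarrow> int set" where
  "conf_beta c = beta (snd c) (fst c)"

definition of_beta :: "int set \<Rightarrow> config" where
  "of_beta B = (THE c. valid_conf c \<and> conf_beta c = B)"

definition eta :: "nat \<Rightarrow> config \<Rightarrow> config list" where
  "eta e c = map (\<lambda>i. of_beta {(b - int i) div int e | b. b \<in> conf_beta c \<and> b mod int e = int i}) [0..<e]"

definition wt :: "nat \<Rightarrow> config \<Rightarrow> nat" where
  "wt e c = sum_list (map (\<lambda>p. part_size (fst p)) (eta e c))"

definition rouquier_r :: "nat \<Rightarrow> nat \<Rightarrow> config \<Rightarrow> bool" where
  "rouquier_r e r c \<longleftrightarrow>
     (\<forall>i. i + 1 < e \<longrightarrow> int (wt e c) \<le> snd (eta e c ! (i + 1)) - snd (eta e c ! i) + int r)"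

definition rouquier :: "nat \<Rightarrow> config \<Rightarrow> bool" where
  "rouquier e c \<longleftrightarrow> rouquier_r e 1 c"

(* Stretching by M = (M_0,...,M_{e-1}), given as a function on indices *)
definition str1 :: "nat \<Rightarrow> (nat \<Rightarrow> int) \<Rightarrow> config \<Rightarrow> config" where
  "str1 e Ms c = (THE d. valid_conf d \<and>
      eta e d = map (\<lambda>i. (fst (eta e c ! i), snd (eta e c ! i) + Ms i)) [0..<e])"

definition str_multi :: "nat \<Rightarrow> (nat \<Rightarrow> int) \<Rightarrow> config list \<Rightarrow> config list" where
  "str_multi e Ms cs = map (str1 e Ms) cs"

(* Uglov's map; an element of A_e^r is a list of r configurations, k-th component at index k-1 *)
definition psi :: "nat \<Rightarrow> nat \<Rightarrow> nat \<Rightarrow> int \<Rightarrow> int" where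
  "psi e r k x = ((x div int e + 1) * int r - int k) * int e + x mod int e"

definition Psi :: "nat \<Rightarrow> nat \<Rightarrow> config list \<Rightarrow> config" where
  "Psi e r cs = of_beta (\<Union>k\<in>{1..r}. psi e r k ` conf_beta (cs ! (k - 1)))"

definition res_mset :: "nat \<Rightarrow> config \<Rightarrow> int multiset" where
  "res_mset e c = (\<Sum>x\<in>{1..length (fst c)}.
      mset (map (\<lambda>y. (snd c + int y - int x) mod int e) [1..<part_nth (fst c) x + 1]))"

definition multi_equiv :: "nat \<Rightarrow> config list \<Rightarrow> config list \<Rightarrow> bool" where
  "multi_equiv e cs ds \<longleftrightarrow>
     map snd cs = map snd ds \<and>
     sum_list (map (\<lambda>c. part_size (fst c)) cs) = sum_list (map (\<lambda>c. part_size (fst c)) ds) \<and>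
     sum_list (map (res_mset e) cs) = sum_list (map (res_mset e) ds)"

definition valid_multi :: "nat \<Rightarrow> config list \<Rightarrow> bool" where
  "valid_multi m cs \<longleftrightarrow> length cs = m \<and> (\<forall>c\<in>set cs. valid_conf c)"

definition block_multi :: "nat \<Rightarrow> nat \<Rightarrow> config list \<Rightarrow> config list set" where
  "block_multi e m x = {y. valid_multi m y \<and> multi_equiv e x y}"

definition block1 :: "nat \<Rightarrow> config \<Rightarrow> config set" where
  "block1 e z = {w. valid_conf w \<and> multi_equiv e [z] [w]}"

definition is_rRouquier_block :: "nat \<Rightarrow> nat \<Rightarrow> config set \<Rightarrow> bool" where
  "is_rRouquier_block e r C \<longleftrightarrow>
     (\<exists>z. valid_conf z \<and> C = block1 e z) \<and> (\<forall>w\<in>C. rouquier_r e r w)"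

end

theory Submission
  imports Defs
begin

text \<open>Everything is done on the abacus: a configuration \<open>(\<lambda>, s)\<close> is its \<open>\<beta>\<close>-set, \<open>\<eta>\<close> reads
  off its \<open>e\<close> runners, stretching by \<open>M\<close> moves the beads of runner \<open>i\<close> up by \<open>M\<^sub>i\<close> levels, and
  the maps \<open>\<psi>\<^sub>k\<close> interleave \<open>r\<close> abaci into one. Counting the beads above a level below which
  every position is occupied shows that charge and residue content determine, and are determined by,
  the runner charges \<open>t\<^sub>i\<close> together with the weight; the same count shows that \<open>\<Psi>\<^sub>r\<close> maps a
  block of \<open>\<A>\<^sub>e\<^sup>r\<close> into a block of \<open>\<A>\<^sub>e\<close>. As \<open>\<psi>\<^sub>k\<close> multiplies levels by \<open>r\<close>,
  \<open>\<Psi>\<^sub>r\<close> turns stretching by \<open>(iM)\<^sub>i\<close> into stretching by \<open>(irM)\<^sub>i\<close>. Hence the image of the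
  stretched block lies in the block of \<open>Str(\<Psi>\<^sub>r x)\<close>, whose runner charges are \<open>t\<^sub>i + irM\<close>; once
  \<open>M\<close> exceeds the weight plus \<open>\<Sum>|t\<^sub>i|\<close>, consecutive charges differ by at least the weight, so
  every member of that block is Rouquier.\<close>

definition beta_num :: "nat list \<Rightarrow> int \<Rightarrow> nat \<Rightarrow> int" where
  "beta_num xs s i = int (part_nth xs i) - int i + s"

lemma part_nth_pos:
  assumes "is_partition xs" "1 \<le> i" "i \<le> length xs"
  shows "part_nth xs i \<ge> 1"
proof -
  have "xs ! (i - 1) \<in> set xs" using assms(2,3) by auto
  then have "xs ! (i - 1) \<noteq> 0" using assms(1) unfolding is_partition_def by metis
  then show ?thesis using assms(2,3) unfolding part_nth_def by auto
qed

lemma part_nth_beyond: "length xs < i \<Longrightarrow> part_nth xs i = 0"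
  unfolding part_nth_def by auto

lemma part_nth_antimono:
  assumes "is_partition xs" "1 \<le> i" "i \<le> j"
  shows "part_nth xs j \<le> part_nth xs i"
proof (cases "j \<le> length xs \<and> i \<noteq> j")
  case True
  have "sorted_wrt (\<lambda>a b. b \<le> a) xs" using assms(1) unfolding is_partition_def by simp
  then have "xs ! (j - 1) \<le> xs ! (i - 1)" using True assms(2,3) unfolding sorted_wrt_iff_nth_less by auto
  then show ?thesis using True assms unfolding part_nth_def by auto
qed (auto simp: part_nth_beyond)

lemma beta_num_strict_antimono:
  "is_partition xs \<Longrightarrow> 1 \<le> i \<Longrightarrow> i < j \<Longrightarrow> beta_num xs s j < beta_num xs s i"
  unfolding beta_num_def using part_nth_antimono[of xs i j] by auto

lemma inj_on_beta_num: "is_partition xs \<Longrightarrow> inj_on (beta_num xs s) {1..n}"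
  unfolding inj_on_def by (metis atLeastAtMost_iff beta_num_strict_antimono less_irrefl nat_neq_iff)

lemma beta_num_gt:
  "is_partition xs \<Longrightarrow> i \<in> {1..length xs} \<Longrightarrow> s - int (length xs) < beta_num xs s i"
  unfolding beta_num_def using part_nth_pos[of xs i] by auto

lemma beta_eq:
  assumes "is_partition xs"
  shows "beta s xs = beta_num xs s ` {1..length xs} \<union> {..< s - int (length xs)}"
proof (intro equalityI subsetI)
  fix z assume "z \<in> beta s xs"
  then obtain i where "i \<ge> 1" "z = beta_num xs s i" unfolding beta_def beta_num_def by auto
  then show "z \<in> beta_num xs s ` {1..length xs} \<union> {..< s - int (length xs)}"
    by (cases "i \<le> length xs") (auto simp: beta_num_def part_nth_beyond)
next
  fix z assume z: "z \<in> beta_num xs s ` {1..length xs} \<union> {..< s - int (length xs)}"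
  show "z \<in> beta s xs"
  proof (cases "z < s - int (length xs)")
    case True
    then have "z = int (part_nth xs (nat (s - z))) - int (nat (s - z)) + s" "nat (s - z) \<ge> 1"
      by (auto simp: part_nth_beyond)
    then show ?thesis unfolding beta_def by blast
  next
    case False
    then show ?thesis using z unfolding beta_def beta_num_def by auto
  qed
qed

lemma beta_above_gap:
  "is_partition xs \<Longrightarrow> beta s xs \<inter> {s - int (length xs)<..} = beta_num xs s ` {1..length xs}"
  using beta_num_gt unfolding beta_eq by fastforce

lemma gap_notin_beta:
  assumes "is_partition xs"
  shows "s - int (length xs) \<notin> beta s xs"
  using beta_num_gt[OF assms] unfolding beta_eq[OF assms] by (metis UnE imageE lessThan_iff less_irrefl)

lemma below_gap_in_beta: "is_partition xs \<Longrightarrow> z < s - int (length xs) \<Longrightarrow> z \<in> beta s xs"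
  unfolding beta_eq by auto

lemma beta_less:
  assumes "is_partition xs" "z \<in> beta s xs"
  shows "z < s + int (part_nth xs 1)"
proof -
  obtain i where "i \<ge> 1" "z = beta_num xs s i" using assms(2) unfolding beta_def beta_num_def by auto
  then show ?thesis using part_nth_antimono[OF assms(1), of 1 i] unfolding beta_num_def by auto
qed

definition is_beta_set :: "int set \<Rightarrow> bool" where
  "is_beta_set B \<longleftrightarrow> (\<exists>U. \<forall>x\<in>B. x < U) \<and> (\<exists>L. \<forall>x<L. x \<in> B)"

lemma is_beta_set_conf_beta: "valid_conf c \<Longrightarrow> is_beta_set (conf_beta c)"
  unfolding is_beta_set_def conf_beta_def valid_conf_def using beta_less below_gap_in_beta by blast

lemma sorted_beta_nums:
  assumes "is_partition xs"
  shows "sorted_wrt (<) (rev (map (beta_num xs s) [1..<length xs + 1]))"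
  unfolding sorted_wrt_rev sorted_wrt_map
  using sorted_wrt_upt[of 1 "length xs + 1"]
  by (rule sorted_wrt_mono_rel[rotated]) (auto intro: beta_num_strict_antimono[OF assms])

lemma conf_beta_inj:
  assumes "valid_conf c" "valid_conf d" "conf_beta c = conf_beta d"
  shows "c = d"
proof -
  obtain xs s ys t where c: "c = (xs, s)" and d: "d = (ys, t)" by fastforce
  have px: "is_partition xs" and py: "is_partition ys" using assms c d by (auto simp: valid_conf_def)
  have B: "beta s xs = beta t ys" using assms(3) c d by (simp add: conf_beta_def)
  have gap: "s - int (length xs) = t - int (length ys)"
    using below_gap_in_beta[OF py, of "s - int (length xs)" t] gap_notin_beta[OF px, of s]
      below_gap_in_beta[OF px, of "t - int (length ys)" s] gap_notin_beta[OF py, of t]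
    unfolding B by linarith
  have im: "beta_num xs s ` {1..length xs} = beta_num ys t ` {1..length ys}"
    using beta_above_gap[OF px, of s] beta_above_gap[OF py, of t] B gap by simp
  then have len: "length xs = length ys"
    using card_image[OF inj_on_beta_num[OF px]] card_image[OF inj_on_beta_num[OF py]] by (metis card_atLeastAtMost diff_Suc_1)
  have st: "s = t" using gap len by simp
  have "set [1..<n + 1] = {1..n}" for n by auto
  then have "rev (map (beta_num ys t) [1..<length ys + 1]) = rev (map (beta_num xs s) [1..<length xs + 1])"
    using strict_sorted_equal[OF sorted_beta_nums[OF px] sorted_beta_nums[OF py]] im by simp
  then have "map (beta_num xs s) [1..<length xs + 1] = map (beta_num ys t) [1..<length ys + 1]" by simp
  then have "beta_num xs s (i + 1) = beta_num ys t (i + 1)" if "i < length xs" for i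
    using arg_cong[of _ _ "\<lambda>l. l ! i"] that len by (simp del: upt_Suc)
  then have "xs = ys"
    using len st by (intro nth_equalityI) (auto simp: beta_num_def part_nth_def)
  then show ?thesis using c d st by simp
qed

lemma sorted_desc_gap:
  assumes "sorted_wrt (>) (xs :: int list)" "i \<le> j" "j < length xs"
  shows "xs ! j + int (j - i) \<le> xs ! i"
  using assms(2,3)
proof (induction j rule: dec_induct)
  case (step j)
  have "xs ! Suc j < xs ! j" using assms(1) step by (auto simp: sorted_wrt_iff_nth_less)
  then show ?case using step by auto
qed simp

lemma beta_of_sorted_desc:
  assumes sorted: "sorted_wrt (>) xs" and above: "\<forall>x\<in>set xs. m < x"
  obtains lam where "is_partition lam" "beta (m + int (length xs)) lam = set xs \<union> {..<m}"
proof -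
  define n where "n = length xs"
  define s where "s = m + int n"
  define lam where "lam = map (\<lambda>k. nat (xs ! k + int k + 1 - s)) [0..<n]"
  have lower: "m + int (n - k) \<le> xs ! k" if "k < n" for k
    using sorted_desc_gap[OF sorted, of k "n - 1"] above nth_mem[of "n - 1" xs] that
    unfolding n_def by fastforce
  have lam_nth: "int (lam ! k) = xs ! k + int k + 1 - s" if "k < n" for k
    using lower[OF that] that unfolding lam_def s_def by simp
  have len: "length lam = n" unfolding lam_def by simp
  have part: "is_partition lam"
    unfolding is_partition_def sorted_wrt_iff_nth_less
  proof (intro conjI allI impI notI)
    fix i j assume "i < j" "j < length lam"
    then show "lam ! j \<le> lam ! i"
      using sorted_desc_gap[OF sorted, of i j] lam_nth[of i] lam_nth[of j] len n_def by simp
  next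
    assume "0 \<in> set lam"
    then obtain k where "k < n" "lam ! k = 0" using len by (auto simp: in_set_conv_nth)
    then show False using lam_nth[of k] lower[of k] unfolding s_def by simp
  qed
  have beta_num_lam: "beta_num lam s (k + 1) = xs ! k" if "k < n" for k
    using lam_nth[OF that] that len unfolding beta_num_def part_nth_def by simp
  have "beta_num lam s ` {1..n} = (\<lambda>k. xs ! k) ` {..<n}"
    unfolding image_Suc_lessThan[symmetric] image_image using beta_num_lam by simp
  also have "\<dots> = set xs" unfolding n_def by (auto simp: in_set_conv_nth)
  finally have "beta_num lam s ` {1..n} = set xs" .
  then have "beta s lam = set xs \<union> {..<m}"
    unfolding beta_eq[OF part] len s_def by simp
  then show ?thesis using part that unfolding s_def n_def by blast
qed

lemma least_gap:
  assumes "is_beta_set B"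
  obtains m where "m \<notin> B" "\<forall>x<m. x \<in> B"
proof -
  obtain U L where U: "\<forall>x\<in>B. x < U" and L: "\<forall>x<L. x \<in> B"
    using assms unfolding is_beta_set_def by auto
  define k0 where "k0 = (LEAST k. L + int k \<notin> B)"
  have "L \<le> U" using U L by force
  then have "L + int (nat (U - L)) \<notin> B" using U by auto
  then have "L + int k0 \<notin> B" unfolding k0_def by (rule LeastI)
  moreover have "x \<in> B" if "x < L + int k0" for x
    using L not_less_Least[of "nat (x - L)" "\<lambda>k. L + int k \<notin> B"] that unfolding k0_def
    by (cases "x < L") auto
  ultimately show ?thesis using that by blast
qed

lemma is_beta_set_realised:
  assumes "is_beta_set B"
  shows "\<exists>c. valid_conf c \<and> conf_beta c = B"
proof -
  obtain m where gap: "m \<notin> B" "\<forall>x<m. x \<in> B" using least_gap[OF assms] .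
  obtain U where "\<forall>x\<in>B. x < U" using assms unfolding is_beta_set_def by auto
  then have "B \<inter> {m<..} \<subseteq> {m<..<U}" by auto
  then have "finite (B \<inter> {m<..})" by (rule finite_subset) simp
  then have xs: "sorted_wrt (>) (rev (sorted_list_of_set (B \<inter> {m<..})))"
    "set (rev (sorted_list_of_set (B \<inter> {m<..}))) = B \<inter> {m<..}"
    by (simp_all add: sorted_wrt_rev)
  obtain lam where "is_partition lam"
    "beta (m + int (length (rev (sorted_list_of_set (B \<inter> {m<..}))))) lam = B \<inter> {m<..} \<union> {..<m}"
    using beta_of_sorted_desc[OF xs(1)] xs(2) by auto
  moreover have "B \<inter> {m<..} \<union> {..<m} = B" using gap by (auto simp: not_less_iff_gr_or_eq)
  ultimately show ?thesis by (auto simp: valid_conf_def conf_beta_def)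
qed

lemma of_beta:
  assumes "is_beta_set B"
  shows valid_conf_of_beta: "valid_conf (of_beta B)" and conf_beta_of_beta: "conf_beta (of_beta B) = B"
proof -
  obtain c where c: "valid_conf c" "conf_beta c = B" using is_beta_set_realised[OF assms] by auto
  have "of_beta B = c"
    unfolding of_beta_def
  proof (rule the_equality)
    show "valid_conf c \<and> conf_beta c = B" using c by simp
    show "d = c" if "valid_conf d \<and> conf_beta d = B" for d
      using that c conf_beta_inj by blast
  qed
  then show "valid_conf (of_beta B)" "conf_beta (of_beta B) = B" using c by auto
qed

lemma of_beta_conf_beta: "valid_conf c \<Longrightarrow> of_beta (conf_beta c) = c"
  using of_beta[OF is_beta_set_conf_beta] conf_beta_inj by metis

lemma of_beta_shift:
  assumes "is_beta_set B"
  shows "of_beta ((\<lambda>x. x + d) ` B) = (fst (of_beta B), snd (of_beta B) + d)"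
proof -
  have "beta (s + d) xs = (\<lambda>x. x + d) ` beta s xs" for s xs
    unfolding beta_def by (auto simp: image_iff)
  then have "conf_beta (fst (of_beta B), snd (of_beta B) + d) = (\<lambda>x. x + d) ` B"
    using conf_beta_of_beta[OF assms] unfolding conf_beta_def by simp
  moreover have "valid_conf (fst (of_beta B), snd (of_beta B) + d)"
    using valid_conf_of_beta[OF assms] by (simp add: valid_conf_def)
  ultimately show ?thesis by (metis of_beta_conf_beta)
qed

definition runner :: "nat \<Rightarrow> nat \<Rightarrow> int set \<Rightarrow> int set" where
  "runner e i B = {a. a * int e + int i \<in> B}"

lemma runner_eq:
  assumes "e > 0" "i < e"
  shows "{(b - int i) div int e | b. b \<in> B \<and> b mod int e = int i} = runner e i B"
proof (intro equalityI subsetI)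
  fix a assume "a \<in> {(b - int i) div int e | b. b \<in> B \<and> b mod int e = int i}"
  then obtain b where b: "b \<in> B" "b mod int e = int i" "a = (b - int i) div int e" by auto
  have b_eq: "b = b div int e * int e + int i" using b(2) by (metis div_mult_mod_eq)
  then have "b - int i = b div int e * int e" by simp
  then have "a = b div int e" using b(3) assms(1) by simp
  then show "a \<in> runner e i B" unfolding runner_def using b(1) b_eq by simp
next
  fix a assume a: "a \<in> runner e i B"
  have "(a * int e + int i) mod int e = int i" "(a * int e + int i - int i) div int e = a"
    using assms by simp_all
  then show "a \<in> {(b - int i) div int e | b. b \<in> B \<and> b mod int e = int i}"
    using a unfolding runner_def by (intro CollectI exI[of _ "a * int e + int i"]) simp
qed

lemma mem_iff_runner: "e > 0 \<Longrightarrow> b \<in> B \<longleftrightarrow> b div int e \<in> runner e (nat (b mod int e)) B"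
  unfolding runner_def by simp

lemma is_beta_set_runner:
  assumes "is_beta_set B" "e > 0"
  shows "is_beta_set (runner e i B)"
proof -
  obtain U L where U: "\<forall>x\<in>B. x < U" and L: "\<forall>x<L. x \<in> B"
    using assms(1) unfolding is_beta_set_def by auto
  have "a < \<bar>U\<bar> + \<bar>int i\<bar> + 1" if "a \<in> runner e i B" for a
  proof -
    have "a * int e + int i < U" using U that unfolding runner_def by auto
    moreover have "a \<le> a * int e" if "a \<ge> 0" using that assms(2) by (simp add: mult_le_cancel_left1)
    ultimately show ?thesis by (cases "a \<ge> 0") auto
  qed
  moreover have "a \<in> runner e i B" if "a < - \<bar>L\<bar> - int i" for a
  proof -
    have "a * int e \<le> a * 1" using that assms(2) by (intro mult_left_mono_neg) auto
    then have "a * int e + int i < L" using that by linarith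
    then show ?thesis using L unfolding runner_def by auto
  qed
  ultimately show ?thesis unfolding is_beta_set_def by blast
qed

lemma eta_length: "length (eta e c) = e"
  unfolding eta_def by simp

lemma eta_nth: "e > 0 \<Longrightarrow> i < e \<Longrightarrow> eta e c ! i = of_beta (runner e i (conf_beta c))"
  unfolding eta_def using runner_eq by simp

lemma
  assumes "e > 0" "valid_conf c" "i < e"
  shows valid_conf_eta_nth: "valid_conf (eta e c ! i)"
    and conf_beta_eta_nth: "conf_beta (eta e c ! i) = runner e i (conf_beta c)"
  using of_beta[OF is_beta_set_runner[OF is_beta_set_conf_beta[OF assms(2)] assms(1)]] eta_nth[OF assms(1,3)]
  by simp_all

lemma eta_inj:
  assumes "e > 0" "valid_conf c" "valid_conf d" "eta e c = eta e d"
  shows "c = d"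
proof -
  have "runner e i (conf_beta c) = runner e i (conf_beta d)" if "i < e" for i
    using conf_beta_eta_nth[OF assms(1,2) that] conf_beta_eta_nth[OF assms(1,3) that] assms(4) by simp
  moreover have "nat (b mod int e) < e" for b using assms(1) by (simp add: nat_less_iff)
  ultimately have "conf_beta c = conf_beta d"
    using mem_iff_runner[OF assms(1)] by blast
  then show ?thesis using conf_beta_inj assms(2,3) by blast
qed

lemma wt_eq_sum: "int (wt e c) = (\<Sum>i<e. int (part_size (fst (eta e c ! i))))"
  unfolding wt_def sum_list_sum_nth by (simp add: eta_length atLeast0LessThan)

text \<open>On \<open>\<beta>\<close>-sets, stretching by \<open>M\<close> moves every bead on runner \<open>i\<close> up by \<open>M\<^sub>i\<close> levels.\<close>

definition stretch_bead :: "nat \<Rightarrow> (nat \<Rightarrow> int) \<Rightarrow> int \<Rightarrow> int" where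
  "stretch_bead e Ms b = b + int e * Ms (nat (b mod int e))"

lemma runner_stretch_bead:
  assumes "e > 0" "i < e"
  shows "runner e i (stretch_bead e Ms ` B) = (\<lambda>x. x + Ms i) ` runner e i B"
proof (intro equalityI subsetI)
  fix a assume "a \<in> runner e i (stretch_bead e Ms ` B)"
  then obtain b where b: "b \<in> B" "a * int e + int i = stretch_bead e Ms b" unfolding runner_def by auto
  have "(a * int e + int i) mod int e = int i" using assms by simp
  moreover have "stretch_bead e Ms b mod int e = b mod int e" unfolding stretch_bead_def by simp
  ultimately have "b mod int e = int i" using b(2) by simp
  then have "b = (a - Ms i) * int e + int i" using b(2) unfolding stretch_bead_def by (simp add: algebra_simps)
  then show "a \<in> (\<lambda>x. x + Ms i) ` runner e i B"
    using b(1) unfolding runner_def by (intro image_eqI[of _ _ "a - Ms i"]) auto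
next
  fix a assume "a \<in> (\<lambda>x. x + Ms i) ` runner e i B"
  then obtain a' where a': "a' * int e + int i \<in> B" "a = a' + Ms i" unfolding runner_def by auto
  have "stretch_bead e Ms (a' * int e + int i) = a * int e + int i"
    using assms unfolding stretch_bead_def a'(2) by (simp add: algebra_simps)
  then show "a \<in> runner e i (stretch_bead e Ms ` B)" unfolding runner_def using a'(1) by (metis imageI mem_Collect_eq)
qed

lemma is_beta_set_stretch:
  assumes "is_beta_set B" "e > 0"
  shows "is_beta_set (stretch_bead e Ms ` B)"
proof -
  obtain U L where U: "\<forall>x\<in>B. x < U" and L: "\<forall>x<L. x \<in> B" using assms unfolding is_beta_set_def by auto
  define K where "K = int e * (\<Sum>i<e. \<bar>Ms i\<bar>)"
  have shift: "\<bar>int e * Ms (nat (b mod int e))\<bar> \<le> K" for b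
  proof -
    have "nat (b mod int e) \<in> {..<e}" using assms(2) by (simp add: nat_less_iff)
    then have "\<bar>Ms (nat (b mod int e))\<bar> \<le> (\<Sum>i<e. \<bar>Ms i\<bar>)" by (intro member_le_sum) auto
    then show ?thesis unfolding K_def by (simp add: abs_mult mult_left_mono)
  qed
  have "x < U + K" if x: "x \<in> stretch_bead e Ms ` B" for x
  proof -
    obtain b where "b \<in> B" "x = stretch_bead e Ms b" using x by auto
    then show ?thesis using U shift[of b] unfolding stretch_bead_def by fastforce
  qed
  moreover have "x \<in> stretch_bead e Ms ` B" if x: "x < L - K" for x
  proof -
    define b where "b = x + (- Ms (nat (x mod int e))) * int e"
    have "b mod int e = x mod int e" unfolding b_def by (simp only: mod_mult_self1)
    then have "stretch_bead e Ms b = x" unfolding stretch_bead_def b_def by simp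
    moreover have "b < L" using x shift[of x] unfolding b_def by (auto simp: algebra_simps)
    ultimately show ?thesis using L by (metis imageI)
  qed
  ultimately show ?thesis unfolding is_beta_set_def by blast
qed

lemma eta_of_beta_stretch:
  assumes "e > 0" "valid_conf c"
  shows "eta e (of_beta (stretch_bead e Ms ` conf_beta c))
           = map (\<lambda>i. (fst (eta e c ! i), snd (eta e c ! i) + Ms i)) [0..<e]"
proof (rule nth_equalityI)
  fix i assume "i < length (eta e (of_beta (stretch_bead e Ms ` conf_beta c)))"
  then have i: "i < e" by (simp add: eta_length)
  have B: "is_beta_set (conf_beta c)" by (rule is_beta_set_conf_beta[OF assms(2)])
  have "runner e i (conf_beta (of_beta (stretch_bead e Ms ` conf_beta c)))
      = (\<lambda>x. x + Ms i) ` runner e i (conf_beta c)"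
    using conf_beta_of_beta[OF is_beta_set_stretch[OF B assms(1)]] runner_stretch_bead[OF assms(1) i] by simp
  then show "eta e (of_beta (stretch_bead e Ms ` conf_beta c)) ! i
      = map (\<lambda>i. (fst (eta e c ! i), snd (eta e c ! i) + Ms i)) [0..<e] ! i"
    using eta_nth[OF assms(1) i] of_beta_shift[OF is_beta_set_runner[OF B assms(1)]] i by simp
qed (simp add: eta_length)

lemma str1_of_beta_stretch:
  assumes "e > 0" "valid_conf c"
  shows "str1 e Ms c = of_beta (stretch_bead e Ms ` conf_beta c)"
  unfolding str1_def
proof (rule the_equality)
  have "is_beta_set (stretch_bead e Ms ` conf_beta c)"
    by (rule is_beta_set_stretch[OF is_beta_set_conf_beta[OF assms(2)] assms(1)])
  then show "valid_conf (of_beta (stretch_bead e Ms ` conf_beta c)) \<and>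
      eta e (of_beta (stretch_bead e Ms ` conf_beta c)) = map (\<lambda>i. (fst (eta e c ! i), snd (eta e c ! i) + Ms i)) [0..<e]"
    using valid_conf_of_beta eta_of_beta_stretch[OF assms] by blast
  then show "d = of_beta (stretch_bead e Ms ` conf_beta c)"
    if "valid_conf d \<and> eta e d = map (\<lambda>i. (fst (eta e c ! i), snd (eta e c ! i) + Ms i)) [0..<e]" for d
    using that eta_inj[OF assms(1)] by metis
qed

lemma
  assumes "e > 0" "valid_conf c"
  shows valid_conf_str1: "valid_conf (str1 e Ms c)"
    and conf_beta_str1: "conf_beta (str1 e Ms c) = stretch_bead e Ms ` conf_beta c"
    and eta_str1: "eta e (str1 e Ms c) = map (\<lambda>i. (fst (eta e c ! i), snd (eta e c ! i) + Ms i)) [0..<e]"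
proof -
  have "is_beta_set (stretch_bead e Ms ` conf_beta c)"
    by (rule is_beta_set_stretch[OF is_beta_set_conf_beta[OF assms(2)] assms(1)])
  then show "valid_conf (str1 e Ms c)" "conf_beta (str1 e Ms c) = stretch_bead e Ms ` conf_beta c"
    unfolding str1_of_beta_stretch[OF assms] by (rule valid_conf_of_beta, rule conf_beta_of_beta)
  show "eta e (str1 e Ms c) = map (\<lambda>i. (fst (eta e c ! i), snd (eta e c ! i) + Ms i)) [0..<e]"
    unfolding str1_of_beta_stretch[OF assms] by (rule eta_of_beta_stretch[OF assms])
qed

lemma
  assumes "e > 0" "valid_conf c"
  shows eta_charge_str1: "i < e \<Longrightarrow> snd (eta e (str1 e Ms c) ! i) = snd (eta e c ! i) + Ms i"
    and wt_str1: "wt e (str1 e Ms c) = wt e c"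
proof -
  show "i < e \<Longrightarrow> snd (eta e (str1 e Ms c) ! i) = snd (eta e c ! i) + Ms i"
    using eta_str1[OF assms] by simp
  have "(\<Sum>i<e. int (part_size (fst (eta e (str1 e Ms c) ! i)))) = (\<Sum>i<e. int (part_size (fst (eta e c ! i))))"
    using eta_str1[OF assms] by (intro sum.cong) auto
  then show "wt e (str1 e Ms c) = wt e c" using wt_eq_sum[of e "str1 e Ms c"] wt_eq_sum[of e c] by simp
qed

lemma sum_atLeast1_atMost: "(\<Sum>i\<in>{1..n}. f i) = (\<Sum>i<n. f (Suc i))"
  using sum.reindex[of Suc "{..<n}" f] by (simp add: image_Suc_lessThan)

lemma part_size_eq_sum: "int (part_size xs) = (\<Sum>i\<in>{1..length xs}. int (part_nth xs i))"
  unfolding part_size_def sum_list_sum_nth sum_atLeast1_atMost atLeast0LessThan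
  by (simp add: part_nth_def)

lemma size_res_mset: "size (res_mset e c) = part_size (fst c)"
proof -
  have "size (sum f A) = (\<Sum>a\<in>A. size (f a))" for f :: "nat \<Rightarrow> int multiset" and A
    by (induct A rule: infinite_finite_induct) simp_all
  then have "int (size (res_mset e c)) = (\<Sum>x\<in>{1..length (fst c)}. int (part_nth (fst c) x))"
    unfolding res_mset_def by (simp del: upt_Suc)
  then show ?thesis using part_size_eq_sum by (metis of_nat_eq_iff)
qed

lemma div_succ_eq:
  assumes "(e::int) > 0"
  shows "(w + 1) div e - w div e = (if (w + 1) mod e = 0 then 1 else 0)"
proof -
  define q where "q = w div e"
  define r where "r = w mod e"
  have w: "w = q * e + r" and r: "0 \<le> r" "r < e" unfolding q_def r_def using assms by auto
  show ?thesis
  proof (cases "r + 1 < e")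
    case True
    have eq: "w + 1 = (r + 1) + q * e" using w by simp
    have "(w + 1) div e = q + (r + 1) div e" "(w + 1) mod e = (r + 1) mod e"
      unfolding eq using div_mult_self1[of e "r + 1" q] mod_mult_self1[of "r + 1" q e] assms by simp_all
    moreover have "(r + 1) div e = 0" "(r + 1) mod e = r + 1" using True r by simp_all
    ultimately show ?thesis using r q_def by simp
  next
    case False
    then have "w + 1 = (q + 1) * e" using w r by (simp add: algebra_simps)
    then show ?thesis using assms q_def by simp
  qed
qed

lemma count_mset_residues_row:
  assumes "(e::int) > 0" "0 \<le> j" "j < e"
  shows "int (count (mset (map (\<lambda>y. (a + int y) mod e) [1..<m+1])) j) = (a + int m - j) div e - (a - j) div e"
proof (induction m)
  case (Suc m)
  have "(a + int m - j + 1) div e - (a + int m - j) div e = (if (a + int m - j + 1) mod e = 0 then 1 else 0)"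
    by (rule div_succ_eq[OF assms(1)])
  moreover have "(a + int m - j + 1) mod e = 0 \<longleftrightarrow> (a + int (Suc m)) mod e = j"
  proof -
    have "(a + int m - j + 1) mod e = 0 \<longleftrightarrow> (a + int (Suc m)) mod e = j mod e"
      by (simp add: mod_eq_dvd_iff dvd_eq_mod_eq_0 algebra_simps)
    then show ?thesis using assms by simp
  qed
  ultimately show ?case using Suc by (auto simp: algebra_simps)
qed simp

text \<open>Cutting a \<open>\<beta>\<close>-set at a level \<open>N\<close> below which it is full leaves finitely many beads;
  comparing them with the beads \<open>N..<s\<close> of the empty partition of the same charge measures the
  partition.\<close>

lemma cut_below_gap: "is_partition xs \<Longrightarrow> \<forall>x<N. x \<in> beta s xs \<Longrightarrow> N \<le> s - int (length xs)"
  using gap_notin_beta by force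

lemma beta_cut_eq:
  assumes "is_partition xs" "\<forall>x<N. x \<in> beta s xs"
  shows "beta s xs \<inter> {N..} = beta_num xs s ` {1..length xs} \<union> {N..<s - int (length xs)}"
proof -
  have "beta_num xs s ` {1..length xs} \<subseteq> {N..}"
    using beta_num_gt[OF assms(1), of _ s] cut_below_gap[OF assms] by fastforce
  then show ?thesis unfolding beta_eq[OF assms(1)] by auto
qed

lemma sum_beta_cut:
  fixes f :: "int \<Rightarrow> int"
  assumes "is_partition xs" "\<forall>x<N. x \<in> beta s xs"
  shows "(\<Sum>b\<in>beta s xs \<inter> {N..}. f b) - (\<Sum>p\<in>{N..<s}. f p)
       = (\<Sum>i\<in>{1..length xs}. f (beta_num xs s i) - f (s - int i))"
proof -
  let ?n = "length xs"
  have "beta_num xs s ` {1..?n} \<subseteq> {s - int ?n<..}" using beta_num_gt[OF assms(1), of _ s] by auto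
  then have disj: "beta_num xs s ` {1..?n} \<inter> {N..<s - int ?n} = {}" by auto
  have "(\<Sum>b\<in>beta_num xs s ` {1..?n}. f b) = (\<Sum>i\<in>{1..?n}. f (beta_num xs s i))"
    by (rule sum.reindex_cong[OF inj_on_beta_num[OF assms(1)] refl refl])
  then have "(\<Sum>b\<in>beta s xs \<inter> {N..}. f b) = (\<Sum>i\<in>{1..?n}. f (beta_num xs s i)) + (\<Sum>p\<in>{N..<s - int ?n}. f p)"
    unfolding beta_cut_eq[OF assms] using disj by (simp add: sum.union_disjoint)
  moreover have "(\<Sum>p\<in>{N..<s}. f p) = (\<Sum>p\<in>{N..<s - int ?n}. f p) + (\<Sum>p\<in>{s - int ?n..<s}. f p)"
    using cut_below_gap[OF assms] by (subst sum.union_disjoint[symmetric]) (auto intro: sum.cong)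
  moreover have "(\<Sum>p\<in>{s - int ?n..<s}. f p) = (\<Sum>i\<in>{1..?n}. f (s - int i))"
    by (rule sum.reindex_bij_witness[of _ "\<lambda>i. s - int i" "\<lambda>p. nat (s - p)"]) auto
  ultimately show ?thesis by (simp add: sum_subtractf)
qed

lemma
  assumes "is_partition xs" "\<forall>x<N. x \<in> beta s xs"
  shows finite_beta_cut: "finite (beta s xs \<inter> {N..})"
    and card_beta_cut: "int (card (beta s xs \<inter> {N..})) = s - N"
proof -
  show fin: "finite (beta s xs \<inter> {N..})" unfolding beta_cut_eq[OF assms] by simp
  have "N \<le> s" using cut_below_gap[OF assms] by simp
  then show "int (card (beta s xs \<inter> {N..})) = s - N"
    using sum_beta_cut[OF assms, of "\<lambda>_. 1"] fin by simp
qed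

lemma
  fixes f :: "int \<Rightarrow> int"
  assumes "valid_conf c" "\<forall>x<N. x \<in> conf_beta c"
  shows finite_conf_beta_cut: "finite (conf_beta c \<inter> {N..})"
    and card_conf_beta_cut: "int (card (conf_beta c \<inter> {N..})) = snd c - N"
    and sum_conf_beta_cut: "(\<Sum>b\<in>conf_beta c \<inter> {N..}. f b) - (\<Sum>p\<in>{N..<snd c}. f p)
       = (\<Sum>i\<in>{1..length (fst c)}. f (beta_num (fst c) (snd c) i) - f (snd c - int i))"
  using finite_beta_cut card_beta_cut sum_beta_cut assms
  by (auto simp: valid_conf_def conf_beta_def)

lemma size_conf_beta_cut:
  assumes "valid_conf c" "\<forall>x<N. x \<in> conf_beta c"
  shows "(\<Sum>b\<in>conf_beta c \<inter> {N..}. b) - (\<Sum>p\<in>{N..<snd c}. p) = int (part_size (fst c))"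
  unfolding sum_conf_beta_cut[OF assms] part_size_eq_sum by (simp add: beta_num_def)

lemma count_res_mset:
  assumes "e > 0" "valid_conf c" "\<forall>x<N. x \<in> conf_beta c" "0 \<le> j" "j < int e"
  shows "int (count (res_mset e c) j)
    = (\<Sum>b\<in>conf_beta c \<inter> {N..}. (b - j) div int e) - (\<Sum>p\<in>{N..<snd c}. (p - j) div int e)"
proof -
  have row: "int (count (mset (map (\<lambda>y. (snd c + int y - int i) mod int e) [1..<part_nth (fst c) i + 1])) j)
      = (beta_num (fst c) (snd c) i - j) div int e - (snd c - int i - j) div int e" for i
    using count_mset_residues_row[of "int e" j "snd c - int i" "part_nth (fst c) i"] assms(1,4,5)
    unfolding beta_num_def by (simp add: algebra_simps)
  show ?thesis
    unfolding sum_conf_beta_cut[OF assms(2,3)] res_mset_def count_sum of_nat_sum row ..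
qed

definition runner_beads :: "nat \<Rightarrow> int set \<Rightarrow> int \<Rightarrow> nat \<Rightarrow> int set" where
  "runner_beads e B n i = {b \<in> B \<inter> {n * int e..}. b mod int e = int i}"

definition level_sum :: "nat \<Rightarrow> int set \<Rightarrow> int \<Rightarrow> int \<Rightarrow> int" where
  "level_sum e B n j = (\<Sum>b\<in>B \<inter> {n * int e..}. (b - j) div int e)"

lemma bij_betw_runner_beads:
  assumes "e > 0" "i < e"
  shows "bij_betw (\<lambda>b. b div int e) (runner_beads e B n i) (runner e i B \<inter> {n..})"
proof (rule bij_betw_byWitness[where f' = "\<lambda>a. a * int e + int i"])
  have b_eq: "b = b div int e * int e + int i" if "b mod int e = int i" for b
    using that by (metis div_mult_mod_eq)
  show "\<forall>b\<in>runner_beads e B n i. b div int e * int e + int i = b"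
    unfolding runner_beads_def using b_eq by auto
  show "\<forall>a\<in>runner e i B \<inter> {n..}. (a * int e + int i) div int e = a"
    using assms by simp
  show "(\<lambda>b. b div int e) ` runner_beads e B n i \<subseteq> runner e i B \<inter> {n..}"
  proof
    fix a assume "a \<in> (\<lambda>b. b div int e) ` runner_beads e B n i"
    then obtain b where b: "b \<in> B" "n * int e \<le> b" "b mod int e = int i" "a = b div int e"
      unfolding runner_beads_def by auto
    have "n \<le> a" using zdiv_mono1[OF b(2), of "int e"] assms b(4) by simp
    then show "a \<in> runner e i B \<inter> {n..}" using b b_eq unfolding runner_def by auto
  qed
  show "(\<lambda>a. a * int e + int i) ` (runner e i B \<inter> {n..}) \<subseteq> runner_beads e B n i"
  proof
    fix b assume "b \<in> (\<lambda>a. a * int e + int i) ` (runner e i B \<inter> {n..})"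
    then obtain a where a: "a \<in> runner e i B" "n \<le> a" "b = a * int e + int i" by auto
    have "n * int e \<le> a * int e" using a(2) by (simp add: mult_right_mono)
    then have "n * int e \<le> b" using a(3) by simp
    then show "b \<in> runner_beads e B n i" using a assms unfolding runner_def runner_beads_def by auto
  qed
qed

locale abacus_cut =
  fixes e :: nat and c :: config and n :: int
  assumes e_pos: "e > 0" and valid: "valid_conf c" and full_below: "\<forall>x < n * int e. x \<in> conf_beta c"
begin

abbreviation "B \<equiv> conf_beta c"

lemma runner_full_below:
  assumes "i < e"
  shows "\<forall>a<n. a \<in> conf_beta (eta e c ! i)"
proof (intro allI impI)
  fix a assume "a < n"
  then have "(a + 1) * int e \<le> n * int e" using e_pos by (simp add: mult_right_mono)
  then have "a * int e + int i < n * int e" using assms by (simp add: algebra_simps)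
  then show "a \<in> conf_beta (eta e c ! i)"
    using full_below conf_beta_eta_nth[OF e_pos valid assms] unfolding runner_def by simp
qed

lemma card_runner_beads: "i < e \<Longrightarrow> int (card (runner_beads e B n i)) = snd (eta e c ! i) - n"
  using bij_betw_same_card[OF bij_betw_runner_beads[OF e_pos]]
    card_conf_beta_cut[OF valid_conf_eta_nth[OF e_pos valid] runner_full_below]
    conf_beta_eta_nth[OF e_pos valid] by metis

lemma sum_runner_beads:
  assumes "i < e"
  shows "(\<Sum>b\<in>runner_beads e B n i. b div int e)
    = int (part_size (fst (eta e c ! i))) + (\<Sum>a\<in>{n..<snd (eta e c ! i)}. a)"
  using sum.reindex_bij_betw[OF bij_betw_runner_beads[OF e_pos assms], of "\<lambda>a. a"]
    size_conf_beta_cut[OF valid_conf_eta_nth[OF e_pos valid assms] runner_full_below[OF assms]]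
    conf_beta_eta_nth[OF e_pos valid assms] by simp

lemma finite_cut: "finite (B \<inter> {n * int e..})"
  by (rule finite_conf_beta_cut[OF valid full_below])

lemma sum_cut_by_runners: "(\<Sum>b\<in>B \<inter> {n * int e..}. g b) = (\<Sum>i<e. \<Sum>b\<in>runner_beads e B n i. g b)"
proof -
  have "B \<inter> {n * int e..} = (\<Union>i<e. runner_beads e B n i)"
    unfolding runner_beads_def using e_pos
    by (auto simp: nat_less_iff intro!: bexI[of _ "nat (_ mod int e)"])
  moreover have "finite (runner_beads e B n i)" for i
    using finite_cut unfolding runner_beads_def by (rule rev_finite_subset) auto
  ultimately show ?thesis
    by (simp only:) (rule sum.UNION_disjoint, auto simp: runner_beads_def)
qed

lemma count_res_mset_level_sum:
  "0 \<le> j \<Longrightarrow> j < int e \<Longrightarrow>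
    int (count (res_mset e c) j) = level_sum e B n j - (\<Sum>p\<in>{n * int e..<snd c}. (p - j) div int e)"
  unfolding level_sum_def by (rule count_res_mset[OF e_pos valid full_below])

text \<open>Consecutive level sums differ by the number of beads on one runner, because
  \<open>\<lfloor>(b - i)/e\<rfloor> - \<lfloor>(b - i - 1)/e\<rfloor>\<close> detects \<open>b \<equiv> i (mod e)\<close>.\<close>

lemma level_sum_diff:
  assumes "i < e"
  shows "level_sum e B n (int i) - level_sum e B n (int i + 1) = snd (eta e c ! i) - n"
proof -
  have "int e dvd b - int i \<longleftrightarrow> b mod int e = int i" for b
    using mod_eq_dvd_iff[of b "int e" "int i"] assms by simp
  then have "(b - int i) div int e - (b - int i - 1) div int e = (if b mod int e = int i then 1 else 0)" for b
    using div_succ_eq[of "int e" "b - int i - 1"] e_pos by (simp add: dvd_eq_mod_eq_0)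
  then have "level_sum e B n (int i) - level_sum e B n (int i + 1)
      = (\<Sum>b\<in>B \<inter> {n * int e..}. if b mod int e = int i then 1 else 0)"
    unfolding level_sum_def sum_subtractf[symmetric] by (simp add: algebra_simps)
  also have "\<dots> = (\<Sum>b\<in>runner_beads e B n i. 1)"
    unfolding runner_beads_def by (rule sum.inter_filter[OF finite_cut, symmetric])
  also have "\<dots> = int (card (runner_beads e B n i))" by simp
  finally show ?thesis using card_runner_beads[OF assms] by simp
qed

lemma charge_eq_runner_charges: "snd c = n * int e + (\<Sum>i<e. snd (eta e c ! i) - n)"
  using card_conf_beta_cut[OF valid full_below] sum_cut_by_runners[of "\<lambda>_. 1::int"] card_runner_beads
  by simp

lemma level_sum_0:
  "level_sum e B n 0 = (\<Sum>i<e. int (part_size (fst (eta e c ! i))) + (\<Sum>a\<in>{n..<snd (eta e c ! i)}. a))"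
  unfolding level_sum_def using sum_cut_by_runners[of "\<lambda>b. b div int e"] sum_runner_beads by simp

end

lemma abacus_cut_lower:
  assumes "abacus_cut e c n" "n' \<le> n"
  shows "abacus_cut e c n'"
proof -
  have "n' * int e \<le> n * int e" using assms(2) by (simp add: mult_right_mono)
  then have "\<forall>x < n' * int e. x \<in> conf_beta c"
    using abacus_cut.full_below[OF assms(1)] by (meson less_le_trans)
  then show ?thesis using assms(1) unfolding abacus_cut_def by blast
qed

lemma abacus_cut_exists:
  assumes "e > 0" "\<forall>c\<in>set cs. valid_conf c"
  shows "\<exists>n. \<forall>c\<in>set cs. abacus_cut e c n"
  using assms(2)
proof (induction cs)
  case (Cons c cs)
  then obtain n where n: "\<forall>d\<in>set cs. abacus_cut e d n" by auto
  have "valid_conf c" using Cons.prems by simp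
  then obtain L where L: "\<forall>x<L. x \<in> conf_beta c"
    using is_beta_set_conf_beta unfolding is_beta_set_def by blast
  define m where "m = min n (- \<bar>L\<bar>)"
  have "m * int e \<le> m * 1" using assms(1) unfolding m_def by (intro mult_left_mono_neg) auto
  then have "abacus_cut e c m" using L \<open>valid_conf c\<close> assms(1) unfolding abacus_cut_def m_def by auto
  moreover have "\<forall>d\<in>set cs. abacus_cut e d m" using n abacus_cut_lower m_def by auto
  ultimately show ?case by auto
qed simp

lemma count_res_mset_outside:
  assumes "e > 0" "j < 0 \<or> j \<ge> int e"
  shows "count (res_mset e c) j = 0"
proof -
  have "0 \<le> a mod int e" "a mod int e < int e" for a using assms(1) by simp_all
  then have "j \<noteq> a mod int e" for a using assms(2) by (metis not_le)
  then have "j \<notin> set (map (\<lambda>y. (snd c + int y - int x) mod int e) l)" for x l by auto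
  then have "count (mset (map (\<lambda>y. (snd c + int y - int x) mod int e) l)) j = 0" for x l
    by (metis count_mset_0_iff)
  then show ?thesis unfolding res_mset_def count_sum by (intro sum.neutral) blast
qed

lemma res_mset_eqI:
  assumes "e > 0" "\<And>j. 0 \<le> j \<Longrightarrow> j < int e \<Longrightarrow> count (res_mset e c) j = count (res_mset e d) j"
  shows "res_mset e c = res_mset e d"
  using assms count_res_mset_outside[OF assms(1)] by (metis multiset_eqI not_le)

lemma multi_equiv_singleton_iff:
  "multi_equiv e [c] [d] \<longleftrightarrow> snd c = snd d \<and> res_mset e c = res_mset e d"
  unfolding multi_equiv_def by (simp add: part_size_def[symmetric]) (metis size_res_mset)

context
  fixes e :: nat and c d :: config and n :: int
  assumes cut_c: "abacus_cut e c n" and cut_d: "abacus_cut e d n"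
begin

lemma res_mset_eq_iff_level_sums:
  assumes "snd c = snd d"
  shows "res_mset e c = res_mset e d \<longleftrightarrow>
    (\<forall>j. 0 \<le> j \<and> j < int e \<longrightarrow> level_sum e (conf_beta c) n j = level_sum e (conf_beta d) n j)"
proof -
  have "int (count (res_mset e c) j) - int (count (res_mset e d) j)
      = level_sum e (conf_beta c) n j - level_sum e (conf_beta d) n j" if "0 \<le> j" "j < int e" for j
    using abacus_cut.count_res_mset_level_sum[OF cut_c that] abacus_cut.count_res_mset_level_sum[OF cut_d that]
      assms by simp
  then show ?thesis
    using res_mset_eqI[OF abacus_cut.e_pos[OF cut_c], of c d] by (metis eq_iff_diff_eq_0 of_nat_eq_iff)
qed

lemma runner_charges_eq_of_level_sums:
  assumes "snd c = snd d"
    and levels: "\<forall>j. 0 \<le> j \<and> j < int e \<longrightarrow> level_sum e (conf_beta c) n j = level_sum e (conf_beta d) n j"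
  shows "\<forall>i<e. snd (eta e c ! i) = snd (eta e d ! i)" "wt e c = wt e d"
proof -
  have e: "e > 0" by (rule abacus_cut.e_pos[OF cut_c])
  have below_last: "snd (eta e c ! i) = snd (eta e d ! i)" if "i < e - 1" for i
    using abacus_cut.level_sum_diff[OF cut_c, of i] abacus_cut.level_sum_diff[OF cut_d, of i]
      levels[rule_format, of "int i"] levels[rule_format, of "int i + 1"] that by simp
  have "(\<Sum>i<Suc (e - 1). snd (eta e c ! i) - n) = (\<Sum>i<Suc (e - 1). snd (eta e d ! i) - n)"
    using abacus_cut.charge_eq_runner_charges[OF cut_c] abacus_cut.charge_eq_runner_charges[OF cut_d]
      assms(1) e by simp
  moreover have "(\<Sum>i<e - 1. snd (eta e c ! i) - n) = (\<Sum>i<e - 1. snd (eta e d ! i) - n)"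
    using below_last by (intro sum.cong) auto
  ultimately have "snd (eta e c ! (e - 1)) = snd (eta e d ! (e - 1))" by simp
  then show charges: "\<forall>i<e. snd (eta e c ! i) = snd (eta e d ! i)"
    using below_last by (metis Suc_pred' e less_SucE)
  have "(\<Sum>i<e. \<Sum>a\<in>{n..<snd (eta e c ! i)}. a) = (\<Sum>i<e. \<Sum>a\<in>{n..<snd (eta e d ! i)}. a)"
    using charges by (intro sum.cong) auto
  then show "wt e c = wt e d"
    using abacus_cut.level_sum_0[OF cut_c] abacus_cut.level_sum_0[OF cut_d] levels e
      wt_eq_sum[of e c] wt_eq_sum[of e d] by (simp add: sum.distrib)
qed

lemma level_sums_eq_of_runner_charges:
  assumes charges: "\<forall>i<e. snd (eta e c ! i) = snd (eta e d ! i)" and "wt e c = wt e d"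
  shows "snd c = snd d"
    "\<forall>j. 0 \<le> j \<and> j < int e \<longrightarrow> level_sum e (conf_beta c) n j = level_sum e (conf_beta d) n j"
proof -
  show "snd c = snd d"
    using abacus_cut.charge_eq_runner_charges[OF cut_c] abacus_cut.charge_eq_runner_charges[OF cut_d] charges
    by simp
  have "(\<Sum>i<e. \<Sum>a\<in>{n..<snd (eta e c ! i)}. a) = (\<Sum>i<e. \<Sum>a\<in>{n..<snd (eta e d ! i)}. a)"
    using charges by (intro sum.cong) auto
  then have "level_sum e (conf_beta c) n 0 = level_sum e (conf_beta d) n 0"
    using abacus_cut.level_sum_0[OF cut_c] abacus_cut.level_sum_0[OF cut_d] assms(2)
      wt_eq_sum[of e c] wt_eq_sum[of e d] by (simp add: sum.distrib)
  then have "level_sum e (conf_beta c) n (int j) = level_sum e (conf_beta d) n (int j)" if "j \<le> e" for j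
    using that
  proof (induction j)
    case (Suc j)
    then show ?case
      using abacus_cut.level_sum_diff[OF cut_c, of j] abacus_cut.level_sum_diff[OF cut_d, of j] charges
      by (simp add: add.commute)
  qed simp
  then show "\<forall>j. 0 \<le> j \<and> j < int e \<longrightarrow> level_sum e (conf_beta c) n j = level_sum e (conf_beta d) n j"
    by (metis int_eq_iff less_imp_le_nat nat_less_iff)
qed

end

text \<open>The abacus form of the Nakayama conjecture: the runner charges determine the \<open>e\<close>-core.\<close>

theorem same_block_iff_runner_charges:
  assumes "e > 0" "valid_conf c" "valid_conf d"
  shows "snd c = snd d \<and> res_mset e c = res_mset e d \<longleftrightarrow>
    (\<forall>i<e. snd (eta e c ! i) = snd (eta e d ! i)) \<and> wt e c = wt e d"
proof -
  obtain n where "\<forall>x\<in>set [c, d]. abacus_cut e x n"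
    using abacus_cut_exists[OF assms(1), of "[c, d]"] assms(2,3) by auto
  then have cuts: "abacus_cut e c n" "abacus_cut e d n" by auto
  show ?thesis
    using res_mset_eq_iff_level_sums[OF cuts] runner_charges_eq_of_level_sums[OF cuts]
      level_sums_eq_of_runner_charges[OF cuts] by blast
qed

lemma le_div_iff_mult_le:
  assumes "(e::int) > 0"
  shows "n \<le> x div e \<longleftrightarrow> n * e \<le> x"
proof
  assume "n \<le> x div e"
  then have "n * e \<le> x div e * e" using assms by (simp add: mult_right_mono)
  also have "\<dots> \<le> x" using assms by (simp add: minus_mod_eq_div_mult[symmetric])
  finally show "n * e \<le> x" .
next
  assume "n * e \<le> x"
  then show "n \<le> x div e" using zdiv_mono1[of "n * e" x e] assms by simp
qed

lemma
  assumes "e > 0"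
  shows psi_mod: "psi e r k x mod int e = x mod int e"
    and psi_div: "psi e r k x div int e = (x div int e + 1) * int r - int k"
  unfolding psi_def using assms by simp_all

lemma psi_ge_iff:
  assumes "e > 0" "1 \<le> k" "k \<le> r"
  shows "n * int r * int e \<le> psi e r k x \<longleftrightarrow> n * int e \<le> x"
proof -
  have "n * int r * int e \<le> psi e r k x \<longleftrightarrow> n * int r \<le> (x div int e + 1) * int r - int k"
    using le_div_iff_mult_le[of "int e"] psi_div[OF assms(1)] assms(1) by (metis of_nat_0_less_iff)
  also have "\<dots> \<longleftrightarrow> n \<le> x div int e"
  proof
    assume le: "n * int r \<le> (x div int e + 1) * int r - int k"
    show "n \<le> x div int e"
    proof (rule ccontr)
      assume "\<not> n \<le> x div int e"
      then have "(x div int e + 1) * int r \<le> n * int r" by (simp add: mult_right_mono)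
      then show False using le assms(2) by linarith
    qed
  next
    assume "n \<le> x div int e"
    then have "(n + 1) * int r \<le> (x div int e + 1) * int r" by (simp add: mult_right_mono)
    then show "n * int r \<le> (x div int e + 1) * int r - int k" using assms(3) by (simp add: algebra_simps)
  qed
  also have "\<dots> \<longleftrightarrow> n * int e \<le> x" using le_div_iff_mult_le[of "int e"] assms(1) by simp
  finally show ?thesis .
qed

text \<open>Writing \<open>p div e = q * r + (r - k)\<close> recovers the component \<open>k\<close> and the level \<open>q\<close>
  of the bead \<open>p\<close>: the map \<open>(k, x) \<mapsto> \<psi>\<^sub>k(x)\<close> is a bijection onto \<open>\<int>\<close>.\<close>

lemma psi_surj:
  assumes "e > 0" "r > 0"
  obtains k x where "k \<in> {1..r}" "p = psi e r k x"
proof -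
  define q where "q = p div int e"
  define k where "k = r - nat (q mod int r)"
  define x where "x = q div int r * int e + p mod int e"
  have "0 \<le> q mod int r" "q mod int r < int r" using assms by simp_all
  then have k: "k \<in> {1..r}" "int k = int r - q mod int r" unfolding k_def by auto
  have "x div int e = q div int r" "x mod int e = p mod int e" unfolding x_def using assms by simp_all
  then have "psi e r k x = ((q div int r + 1) * int r - int k) * int e + p mod int e"
    unfolding psi_def by simp
  also have "\<dots> = p" unfolding k(2) q_def by (simp add: algebra_simps minus_mod_eq_mult_div[symmetric])
  finally show ?thesis using that k(1) by metis
qed

lemma psi_inj:
  assumes "e > 0" "k \<in> {1..r}" "k' \<in> {1..r}" "psi e r k x = psi e r k' x'"
  shows "k = k'" "x = x'"
proof -
  have quot: "(x div int e + 1) * int r - int k = (x' div int e + 1) * int r - int k'"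
    using psi_div[OF assms(1), of r k x] psi_div[OF assms(1), of r k' x'] assms(4) by simp
  have rem: "((z + 1) * int r - int j) mod int r = int r - int j" if "j \<in> {1..r}" for z j
  proof -
    have "(z + 1) * int r - int j = (int r - int j) + z * int r" by (simp add: algebra_simps)
    then have "((z + 1) * int r - int j) mod int r = (int r - int j) mod int r" by (simp only: mod_mult_self1)
    moreover have "(int r - int j) mod int r = int r - int j" using that by (intro mod_pos_pos_trivial) auto
    ultimately show ?thesis by (rule trans)
  qed
  show k: "k = k'" using rem[OF assms(2), of "x div int e"] rem[OF assms(3), of "x' div int e"] quot by simp
  have "x div int e = x' div int e" "x mod int e = x' mod int e"
    using quot k assms psi_mod[OF assms(1), of r k x] psi_mod[OF assms(1), of r k' x'] by auto
  then show "x = x'" by (metis div_mult_mod_eq)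
qed

lemma is_beta_set_iff_bdd_above: "is_beta_set B \<longleftrightarrow> bdd_above B \<and> (\<exists>L. \<forall>x<L. x \<in> B)"
proof -
  have "bdd_above B \<longleftrightarrow> (\<exists>U. \<forall>x\<in>B. x < U)"
    unfolding bdd_above_def by (metis zle_add1_eq_le order_less_imp_le)
  then show ?thesis unfolding is_beta_set_def by simp
qed

lemma bdd_above_psi_image:
  assumes "e > 0" "k \<in> {1..r}" "bdd_above A"
  shows "bdd_above (psi e r k ` A)"
proof -
  obtain M where M: "\<forall>x\<in>A. x \<le> M" using assms(3) unfolding bdd_above_def by auto
  have "M < (\<bar>M\<bar> + 1) * int e" using assms(1) by (smt (verit) mult_le_cancel_left1 of_nat_0_less_iff)
  then have "psi e r k x \<le> (\<bar>M\<bar> + 1) * int r * int e" if "x \<in> A" for x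
    using M that psi_ge_iff[OF assms(1), of k r "\<bar>M\<bar> + 1" x] assms(2) by auto
  then have "\<forall>x\<in>A. psi e r k x \<le> (\<bar>M\<bar> + 1) * int r * int e" by blast
  then show ?thesis unfolding bdd_above_def by auto
qed

definition uglov_beta :: "nat \<Rightarrow> nat \<Rightarrow> config list \<Rightarrow> int set" where
  "uglov_beta e r y = (\<Union>k\<in>{1..r}. psi e r k ` conf_beta (y ! (k - 1)))"

lemma uglov_beta_full_below:
  assumes "e > 0" "r > 0" "\<forall>k\<in>{1..r}. \<forall>x < n * int e. x \<in> conf_beta (y ! (k - 1))"
  shows "\<forall>p < n * int r * int e. p \<in> uglov_beta e r y"
proof (intro allI impI)
  fix p assume "p < n * int r * int e"
  moreover obtain k x where kx: "k \<in> {1..r}" "p = psi e r k x" using psi_surj[OF assms(1,2)] .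
  ultimately have "x < n * int e" using psi_ge_iff[OF assms(1), of k r n x] by auto
  then show "p \<in> uglov_beta e r y" using assms(3) kx unfolding uglov_beta_def by blast
qed

lemma
  assumes "e > 0" "r > 0" "valid_multi r y"
  shows valid_conf_Psi: "valid_conf (Psi e r y)"
    and conf_beta_Psi: "conf_beta (Psi e r y) = uglov_beta e r y"
proof -
  have component: "y ! (k - 1) \<in> set y" if "k \<in> {1..r}" for k
    using assms(3) that unfolding valid_multi_def by auto
  then have valid: "valid_conf (y ! (k - 1))" if "k \<in> {1..r}" for k
    using assms(3) that unfolding valid_multi_def by auto
  obtain n where "\<forall>c\<in>set y. abacus_cut e c n"
    using abacus_cut_exists[OF assms(1)] assms(3) unfolding valid_multi_def by blast
  then have "\<forall>k\<in>{1..r}. \<forall>x < n * int e. x \<in> conf_beta (y ! (k - 1))"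
    using component abacus_cut.full_below by blast
  then have "\<exists>L. \<forall>p<L. p \<in> uglov_beta e r y" using uglov_beta_full_below[OF assms(1,2)] by blast
  moreover have "bdd_above (uglov_beta e r y)"
    unfolding uglov_beta_def using valid is_beta_set_conf_beta is_beta_set_iff_bdd_above
      bdd_above_psi_image[OF assms(1)] by simp
  ultimately have "is_beta_set (uglov_beta e r y)" unfolding is_beta_set_iff_bdd_above by blast
  then show "valid_conf (Psi e r y)" "conf_beta (Psi e r y) = uglov_beta e r y"
    unfolding Psi_def uglov_beta_def[symmetric] by (rule valid_conf_of_beta, rule conf_beta_of_beta)
qed

lemma psi_level:
  assumes "e > 0"
  shows "(psi e r k b - j) div int e = (b - j) div int e + (int r - 1) * (b div int e) + (int r - int k)"
proof -
  have "(psi e r k b - j) div int e = ((b div int e + 1) * int r - int k) + (b mod int e - j) div int e"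
    using div_mult_self1[of "int e" "b mod int e - j" "(b div int e + 1) * int r - int k"] assms
    unfolding psi_def by (simp add: algebra_simps)
  moreover have "(b - j) div int e = b div int e + (b mod int e - j) div int e"
    using div_mult_self1[of "int e" "b mod int e - j" "b div int e"] assms
    by (simp add: algebra_simps minus_mod_eq_mult_div[symmetric])
  ultimately show ?thesis by (simp add: algebra_simps)
qed

lemma sum_list_map_nth: "sum_list (map f y) = (\<Sum>k\<in>{1..length y}. f (y ! (k - 1)))"
  unfolding sum_list_sum_nth sum_atLeast1_atMost by (simp add: atLeast0LessThan)

locale uglov_cut =
  fixes e r :: nat and y :: "config list" and n :: int
  assumes e_pos: "e > 0" and r_pos: "r > 0" and valid: "valid_multi r y"
    and cuts: "\<And>k. k \<in> {1..r} \<Longrightarrow> abacus_cut e (y ! (k - 1)) n"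
begin

abbreviation "B k \<equiv> conf_beta (y ! (k - 1))"

lemma abacus_cut_Psi: "abacus_cut e (Psi e r y) (n * int r)"
proof -
  have "\<forall>p < n * int r * int e. p \<in> uglov_beta e r y"
    using uglov_beta_full_below[OF e_pos r_pos] abacus_cut.full_below[OF cuts] by blast
  then show ?thesis unfolding abacus_cut_def
    using e_pos valid_conf_Psi[OF e_pos r_pos valid] conf_beta_Psi[OF e_pos r_pos valid] by simp
qed

lemma uglov_beta_cut:
  "uglov_beta e r y \<inter> {n * int r * int e..} = (\<Union>k\<in>{1..r}. psi e r k ` (B k \<inter> {n * int e..}))"
  unfolding uglov_beta_def using psi_ge_iff[OF e_pos] by fastforce

lemma sum_uglov_beta_cut:
  "(\<Sum>p\<in>uglov_beta e r y \<inter> {n * int r * int e..}. g p) = (\<Sum>k\<in>{1..r}. \<Sum>b\<in>B k \<inter> {n * int e..}. g (psi e r k b))"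
proof -
  have inj: "inj_on (psi e r k) A" if "k \<in> {1..r}" for k A
    using psi_inj(2)[OF e_pos that that] by (auto intro: inj_onI)
  have "(\<Sum>p\<in>uglov_beta e r y \<inter> {n * int r * int e..}. g p)
      = (\<Sum>k\<in>{1..r}. \<Sum>p\<in>psi e r k ` (B k \<inter> {n * int e..}). g p)"
    unfolding uglov_beta_cut
  proof (rule sum.UNION_disjoint)
    show "\<forall>k\<in>{1..r}. finite (psi e r k ` (B k \<inter> {n * int e..}))"
      using abacus_cut.finite_cut[OF cuts] by blast
    show "\<forall>k\<in>{1..r}. \<forall>k'\<in>{1..r}. k \<noteq> k' \<longrightarrow>
        psi e r k ` (B k \<inter> {n * int e..}) \<inter> psi e r k' ` (B k' \<inter> {n * int e..}) = {}"
      using psi_inj(1)[OF e_pos] by blast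
  qed simp
  also have "\<dots> = (\<Sum>k\<in>{1..r}. \<Sum>b\<in>B k \<inter> {n * int e..}. g (psi e r k b))"
    using inj by (intro sum.cong refl sum.reindex_cong) auto
  finally show ?thesis .
qed

lemma charge_Psi: "snd (Psi e r y) = n * int r * int e + (\<Sum>k\<in>{1..r}. snd (y ! (k - 1)) - n * int e)"
proof -
  have "int (card (uglov_beta e r y \<inter> {n * int r * int e..}))
      = (\<Sum>k\<in>{1..r}. int (card (B k \<inter> {n * int e..})))"
    using sum_uglov_beta_cut[of "\<lambda>_. 1::int"] by simp
  also have "\<dots> = (\<Sum>k\<in>{1..r}. snd (y ! (k - 1)) - n * int e)"
    using card_conf_beta_cut[OF abacus_cut.valid abacus_cut.full_below, OF cuts cuts] by simp
  finally show ?thesis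
    using card_conf_beta_cut[OF abacus_cut.valid abacus_cut.full_below, OF abacus_cut_Psi abacus_cut_Psi]
      conf_beta_Psi[OF e_pos r_pos valid] by simp
qed

lemma level_sum_Psi:
  "level_sum e (uglov_beta e r y) (n * int r) j = (\<Sum>k\<in>{1..r}. level_sum e (B k) n j
     + (int r - 1) * level_sum e (B k) n 0 + (int r - int k) * (snd (y ! (k - 1)) - n * int e))"
  using sum_uglov_beta_cut[of "\<lambda>p. (p - j) div int e"]
    card_conf_beta_cut[OF abacus_cut.valid abacus_cut.full_below, OF cuts cuts]
  unfolding level_sum_def psi_level[OF e_pos]
  by (simp add: mult.commute mult.left_commute sum.distrib sum_distrib_left)

lemma sum_level_sums:
  assumes "0 \<le> j" "j < int e"
  shows "(\<Sum>k\<in>{1..r}. level_sum e (B k) n j) = int (count (sum_list (map (res_mset e) y)) j)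
    + (\<Sum>k\<in>{1..r}. \<Sum>p\<in>{n * int e..<snd (y ! (k - 1))}. (p - j) div int e)"
proof -
  have "int (count (sum_list (map (res_mset e) y)) j) = (\<Sum>k\<in>{1..r}. int (count (res_mset e (y ! (k - 1))) j))"
    using valid unfolding sum_list_map_nth count_sum valid_multi_def by simp
  also have "\<dots> = (\<Sum>k\<in>{1..r}. level_sum e (B k) n j
      - (\<Sum>p\<in>{n * int e..<snd (y ! (k - 1))}. (p - j) div int e))"
    using abacus_cut.count_res_mset_level_sum[OF cuts assms] by simp
  finally show ?thesis by (simp add: sum_subtractf)
qed

end

theorem Psi_preserves_blocks:
  assumes e: "e > 0" and r: "r > 0" and valid: "valid_multi r y" "valid_multi r y'"
    and equiv: "multi_equiv e y y'"
  shows "snd (Psi e r y) = snd (Psi e r y') \<and> res_mset e (Psi e r y) = res_mset e (Psi e r y')"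
proof -
  have len: "length y = r" "length y' = r" using valid unfolding valid_multi_def by auto
  obtain n where n: "\<forall>c\<in>set (y @ y'). abacus_cut e c n"
    using abacus_cut_exists[OF e, of "y @ y'"] valid unfolding valid_multi_def by auto
  have "y ! (k - 1) \<in> set (y @ y')" "y' ! (k - 1) \<in> set (y @ y')" if "k \<in> {1..r}" for k
    using that len by auto
  then interpret U: uglov_cut e r y n + U': uglov_cut e r y' n
    using e r valid n by (simp_all add: uglov_cut_def)
  have charges: "snd (y ! (k - 1)) = snd (y' ! (k - 1))" if "k \<in> {1..r}" for k
    using equiv that len unfolding multi_equiv_def by (metis nth_map atLeastAtMost_iff diff_less less_le_trans zero_less_one)
  then have charge: "snd (Psi e r y) = snd (Psi e r y')" using U.charge_Psi U'.charge_Psi by simp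
  have sums: "(\<Sum>k\<in>{1..r}. level_sum e (U.B k) n j) = (\<Sum>k\<in>{1..r}. level_sum e (U'.B k) n j)"
    if "0 \<le> j" "j < int e" for j
    using U.sum_level_sums[OF that] U'.sum_level_sums[OF that] equiv charges unfolding multi_equiv_def by simp
  have "level_sum e (uglov_beta e r y) (n * int r) j = level_sum e (uglov_beta e r y') (n * int r) j"
    if "0 \<le> j" "j < int e" for j
    using sums[OF that] sums[of 0] charges e unfolding U.level_sum_Psi U'.level_sum_Psi
    by (simp add: sum.distrib sum_distrib_left[symmetric])
  then have "res_mset e (Psi e r y) = res_mset e (Psi e r y')"
    using res_mset_eq_iff_level_sums[OF U.abacus_cut_Psi U'.abacus_cut_Psi charge]
      conf_beta_Psi[OF e r valid(1)] conf_beta_Psi[OF e r valid(2)] by simp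
  with charge show ?thesis ..
qed

lemma psi_stretch_bead:
  assumes "e > 0"
  shows "psi e r k (stretch_bead e Ms b) = stretch_bead e (\<lambda>i. int r * Ms i) (psi e r k b)"
proof -
  define m where "m = Ms (nat (b mod int e))"
  have "stretch_bead e Ms b div int e = b div int e + m" "stretch_bead e Ms b mod int e = b mod int e"
    unfolding stretch_bead_def m_def using assms by simp_all
  then show ?thesis
    unfolding psi_def stretch_bead_def psi_mod[OF assms, unfolded psi_def] m_def[symmetric]
    by (simp add: algebra_simps)
qed

lemma
  assumes "e > 0" "valid_multi r y"
  shows valid_multi_str_multi: "valid_multi r (str_multi e Ms y)"
    and str_multi_nth: "k \<in> {1..r} \<Longrightarrow> str_multi e Ms y ! (k - 1) = str1 e Ms (y ! (k - 1))"
  using assms valid_conf_str1 unfolding valid_multi_def str_multi_def by auto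

theorem Psi_str_multi:
  assumes e: "e > 0" and r: "r > 0" and valid: "valid_multi r y"
  shows "Psi e r (str_multi e Ms y) = str1 e (\<lambda>i. int r * Ms i) (Psi e r y)"
proof (rule conf_beta_inj)
  have "y ! (k - 1) \<in> set y" if "k \<in> {1..r}" for k using valid that unfolding valid_multi_def by auto
  then have "conf_beta (str_multi e Ms y ! (k - 1)) = stretch_bead e Ms ` conf_beta (y ! (k - 1))"
    if "k \<in> {1..r}" for k
    using that valid str_multi_nth[OF e valid] conf_beta_str1[OF e] unfolding valid_multi_def by auto
  then have "uglov_beta e r (str_multi e Ms y) = stretch_bead e (\<lambda>i. int r * Ms i) ` uglov_beta e r y"
    unfolding uglov_beta_def by (simp add: image_UN image_image psi_stretch_bead[OF e])
  then show "conf_beta (Psi e r (str_multi e Ms y)) = conf_beta (str1 e (\<lambda>i. int r * Ms i) (Psi e r y))"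
    using conf_beta_Psi[OF e r] valid_multi_str_multi[OF e valid] valid
      conf_beta_str1[OF e valid_conf_Psi[OF e r valid]] by simp
qed (use e r valid valid_multi_str_multi[OF e valid] valid_conf_Psi valid_conf_str1 in auto)

lemma str1_preserves_blocks:
  assumes "e > 0" "valid_conf c" "valid_conf d" "snd c = snd d \<and> res_mset e c = res_mset e d"
  shows "snd (str1 e Ms c) = snd (str1 e Ms d) \<and> res_mset e (str1 e Ms c) = res_mset e (str1 e Ms d)"
proof -
  have "(\<forall>i<e. snd (eta e c ! i) = snd (eta e d ! i)) \<and> wt e c = wt e d"
    using same_block_iff_runner_charges[OF assms(1-3)] assms(4) by blast
  then have "(\<forall>i<e. snd (eta e (str1 e Ms c) ! i) = snd (eta e (str1 e Ms d) ! i))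
      \<and> wt e (str1 e Ms c) = wt e (str1 e Ms d)"
    using eta_charge_str1[OF assms(1)] wt_str1[OF assms(1)] assms(2,3) by simp
  then show ?thesis
    using same_block_iff_runner_charges[OF assms(1) valid_conf_str1[OF assms(1,2)] valid_conf_str1[OF assms(1,3)]]
    by blast
qed

lemma rouquier_r_mono: "rouquier_r e r c \<Longrightarrow> r \<le> r' \<Longrightarrow> rouquier_r e r' c"
  unfolding rouquier_r_def by force

text \<open>Members of a block share runner charges and weight, so only the stretched charges of \<open>z\<close>
  have to be compared with its weight.\<close>

lemma rouquier_block_str1:
  assumes e: "e > 0" and valid: "valid_conf z"
    and M: "int (wt e z) + (\<Sum>i<e. \<bar>snd (eta e z ! i)\<bar>) \<le> M"
    and w: "w \<in> block1 e (str1 e (\<lambda>i. int i * M) z)"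
  shows "rouquier e w"
  unfolding rouquier_def rouquier_r_def
proof (intro allI impI)
  fix i assume i: "i + 1 < e"
  let ?t = "\<lambda>i. snd (eta e z ! i)"
  have "valid_conf w" and same: "snd (str1 e (\<lambda>i. int i * M) z) = snd w \<and>
      res_mset e (str1 e (\<lambda>i. int i * M) z) = res_mset e w"
    using w unfolding block1_def multi_equiv_singleton_iff by auto
  then have "(\<forall>j<e. snd (eta e (str1 e (\<lambda>i. int i * M) z) ! j) = snd (eta e w ! j))
      \<and> wt e (str1 e (\<lambda>i. int i * M) z) = wt e w"
    using same_block_iff_runner_charges[OF e valid_conf_str1[OF e valid]] by blast
  then have "snd (eta e w ! j) = ?t j + int j * M" "wt e w = wt e z" if "j < e" for j
    using eta_charge_str1[OF e valid that, of "\<lambda>i. int i * M"] wt_str1[OF e valid, of "\<lambda>i. int i * M"] that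
    by auto
  moreover have "\<bar>?t i\<bar> + \<bar>?t (i + 1)\<bar> \<le> (\<Sum>j<e. \<bar>?t j\<bar>)"
    using sum_mono2[of "{..<e}" "{i, i + 1}" "\<lambda>j. \<bar>?t j\<bar>"] i by simp
  ultimately show "int (wt e w) \<le> snd (eta e w ! (i + 1)) - snd (eta e w ! i) + int 1"
    using M i by (simp add: algebra_simps)
qed

lemma Psi_str_multi_in_block:
  assumes e: "e > 0" and r: "r > 0" and x: "valid_multi r x" and y: "y \<in> block_multi e r x"
  shows "Psi e r (str_multi e Ms y) \<in> block1 e (Psi e r (str_multi e Ms x))"
proof -
  have valid_y: "valid_multi r y" and "multi_equiv e x y" using y unfolding block_multi_def by auto
  then have "snd (Psi e r x) = snd (Psi e r y) \<and> res_mset e (Psi e r x) = res_mset e (Psi e r y)"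
    using Psi_preserves_blocks[OF e r x] by blast
  then show ?thesis
    unfolding block1_def multi_equiv_singleton_iff Psi_str_multi[OF e r x] Psi_str_multi[OF e r valid_y]
    using str1_preserves_blocks[OF e] valid_conf_Psi[OF e r] valid_conf_str1[OF e] x valid_y by simp
qed

theorem lemma3p8:
  fixes e r :: nat and x :: "config list"
  assumes "e \<ge> 2" and "r \<ge> 1" and "valid_multi r x"
  shows "\<exists>Mstar::int. \<forall>M::int. M \<ge> Mstar \<longrightarrow>
           (\<forall>y\<in>Psi e r ` str_multi e (\<lambda>i. int i * M) ` block_multi e r x. rouquier e y) \<and>
           (\<exists>C. is_rRouquier_block e r C \<and>
                Psi e r ` str_multi e (\<lambda>i. int i * M) ` block_multi e r x \<subseteq> C)"
proof -
  have e: "e > 0" and r: "r > 0" using assms(1,2) by auto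
  define z where "z = Psi e r x"
  have z: "valid_conf z" unfolding z_def by (rule valid_conf_Psi[OF e r assms(3)])
  define Mstar where "Mstar = int (wt e z) + (\<Sum>i<e. \<bar>snd (eta e z ! i)\<bar>)"
  have "Mstar \<ge> 0" unfolding Mstar_def by (simp add: sum_nonneg)
  show ?thesis
  proof (intro exI[of _ Mstar] allI impI)
    fix M assume "Mstar \<le> M"
    then have M: "Mstar \<le> M * int r" using \<open>Mstar \<ge> 0\<close> r by (smt (verit) mult_le_cancel_left1 of_nat_0_less_iff)
    define C where "C = block1 e (Psi e r (str_multi e (\<lambda>i. int i * M) x))"
    have C_eq: "C = block1 e (str1 e (\<lambda>i. int i * (M * int r)) z)"
      unfolding C_def z_def Psi_str_multi[OF e r assms(3)] by (simp add: algebra_simps)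
    have sub: "Psi e r ` str_multi e (\<lambda>i. int i * M) ` block_multi e r x \<subseteq> C"
      unfolding C_def using Psi_str_multi_in_block[OF e r assms(3)] by blast
    have rouq: "\<forall>w\<in>C. rouquier e w"
      unfolding C_eq using rouquier_block_str1[OF e z] M unfolding Mstar_def by blast
    then have "is_rRouquier_block e r C"
      unfolding is_rRouquier_block_def rouquier_def using rouquier_r_mono assms(2) C_eq valid_conf_str1[OF e z] by blast
    then show "(\<forall>w\<in>Psi e r ` str_multi e (\<lambda>i. int i * M) ` block_multi e r x. rouquier e w) \<and>
        (\<exists>C. is_rRouquier_block e r C \<and> Psi e r ` str_multi e (\<lambda>i. int i * M) ` block_multi e r x \<subseteq> C)"
      using sub rouq by blast
  qed
qed

end
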